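(* Let $\mathcal A=\{G\in\mathcal G:\ \overline G\text{ is Abelian}\}$ and let $A\in\mathcal G$ be such that $\overline A\cong\bigoplus_{p\in\mathbf P}\mathbb Z[p^\infty]^{(\mathbb N)}$. Then the isomorphism class $\{G\in\mathcal G:\ \overline G\cong\overline A\}$ is dense in $\mathcal A$.
   Context: Let $\mathbb N=\{1,2,3,\dots\}$. Equip $\mathbb N^{\mathbb N\times\mathbb N}$ with the product topology of the discrete topology on $\mathbb N$. Let $\mathcal G$ be the subspace consisting of those $A\in\mathbb N^{\mathbb N\times\mathbb N}$ that are the multiplication table of a group on the underlying set $\mathbb N$ whose identity element is $1$. For $G\in\mathcal G$, $\overline G$ denotes the group on $\mathbb N$ with multiplication table $G$. $\mathbf P$ is the set of primes, $\mathbb Z[p^\infty]$ is the Prüfer $p$-group, and $K^{(\mathbb N)}$ is the direct sum of countably infinitely many copies of $K$. $\mathcal A$ carries the subspace topology. *)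

theory Defs
  imports "HOL-Analysis.Analysis" "HOL-Algebra.Algebra"
begin

definition Npos :: "nat set" where "Npos = {1..}"

definition table_space :: "(nat \<times> nat \<Rightarrow> nat) topology" where
  "table_space = product_topology (\<lambda>_. discrete_topology Npos) (Npos \<times> Npos)"

definition tbl :: "(nat \<times> nat \<Rightarrow> nat) \<Rightarrow> nat monoid" where
  "tbl A = \<lparr>carrier = Npos, mult = (\<lambda>x y. A (x, y)), one = 1\<rparr>"

definition GG :: "(nat \<times> nat \<Rightarrow> nat) set" where
  "GG = {A \<in> topspace table_space. group (tbl A)}"

definition AA :: "(nat \<times> nat \<Rightarrow> nat) set" where
  "AA = {A \<in> GG. comm_group (tbl A)}"

text \<open>Pruefer p-group Z[p^infinity], realised as the p-power-denominator part of Q/Z,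
  with representatives in [0,1).\<close>
definition prufer :: "nat \<Rightarrow> rat monoid" where
  "prufer p = \<lparr>carrier = {r::rat. 0 \<le> r \<and> r < 1 \<and> (\<exists>k::nat. r * of_nat (p ^ k) \<in> \<int>)},
               mult = (\<lambda>x y. x + y - of_int \<lfloor>x + y\<rfloor>), one = 0\<rparr>"

definition target_group :: "(nat \<Rightarrow> nat \<Rightarrow> rat) monoid" where
  "target_group = sum_group {p::nat. Factorial_Ring.prime p} (\<lambda>p. sum_group Npos (\<lambda>_. prufer p))"

end

theory Submission
  imports Defs
begin

(* A basic neighbourhood of G \<in> AA prescribes finitely many products G (x, y), which involve
   a finite set S of elements. It therefore suffices to map S injectively into the target group
   T = \<Oplus>_p \<int>[p^\<infinity>]^(\<nat>), sending 1 to the identity and respecting all products of elements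
   of S: extending such a map to a bijection \<phi> from \<nat> onto T and transporting the group
   structure of T along \<phi> yields a table isomorphic to A that agrees with G on the prescribed
   entries.

   Such a map is built from homomorphisms into Pruefer groups. Since \<int>[p^\<infinity>] is divisible,
   a homomorphism from a subgroup of an abelian group into it extends to any larger subgroup;
   hence for s \<noteq> u in S there is one, defined on a subgroup containing S, that separates s and u.
   Finitely many of these, placed in distinct coordinates of T, give the required map.
   Finally, every table isomorphic to A is abelian because T is. *)

section \<open>The groups \<open>\<int>[1/p]\<close> and \<open>\<int>[p\<^sup>\<infinity>]\<close>\<close>

lemma frac_eq_iff_diff_Ints: "frac a = frac b \<longleftrightarrow> a - b \<in> \<int>"
  by (metis frac_diff_eq frac_diff_zero frac_eq_0_iff)

lemma Ints_iff_if_diff_Ints: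
  assumes "a - b \<in> \<int>"
  shows "a \<in> \<int> \<longleftrightarrow> b \<in> \<int>"
proof
  show "b \<in> \<int>" if "a \<in> \<int>" using Ints_diff[OF that assms] by simp
  show "a \<in> \<int>" if "b \<in> \<int>" using Ints_add[OF assms that] by simp
qed

lemma Ints_add_eqI: "a \<in> \<int> \<Longrightarrow> b \<in> \<int> \<Longrightarrow> c = a + b \<Longrightarrow> c \<in> \<int>"
  by simp

(* Zinv p is \<int>[1/p]; the Pruefer group prufer p consists of its representatives modulo \<int>. *)
definition Zinv :: "nat \<Rightarrow> rat set" where
  "Zinv p = {r. \<exists>k. r * of_nat (p ^ k) \<in> \<int>}"

lemma Ints_subset_Zinv: "r \<in> \<int> \<Longrightarrow> r \<in> Zinv p"
  unfolding Zinv_def by (rule CollectI, rule exI[of _ 0]) simp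

lemma Zinv_add:
  assumes "a \<in> Zinv p" "b \<in> Zinv p"
  shows "a + b \<in> Zinv p"
proof -
  obtain k l where k: "a * of_nat (p ^ k) \<in> \<int>" and l: "b * of_nat (p ^ l) \<in> \<int>"
    using assms by (auto simp: Zinv_def)
  have "(a * of_nat (p ^ k)) * of_nat (p ^ l) + (b * of_nat (p ^ l)) * of_nat (p ^ k) \<in> \<int>"
    using k l by (intro Ints_add Ints_mult[OF k] Ints_mult[OF l] Ints_of_nat)
  then have "(a + b) * of_nat (p ^ (k + l)) \<in> \<int>"
    by (simp add: power_add algebra_simps)
  then show ?thesis unfolding Zinv_def by blast
qed

lemma Zinv_Ints_mult:
  assumes "n \<in> \<int>" "a \<in> Zinv p"
  shows "n * a \<in> Zinv p"
proof -
  obtain k where "a * of_nat (p ^ k) \<in> \<int>" using assms(2) by (auto simp: Zinv_def)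
  then have "n * a * of_nat (p ^ k) \<in> \<int>" using assms(1) by (metis Ints_mult mult.assoc)
  then show ?thesis unfolding Zinv_def by blast
qed

lemma Zinv_uminus: "a \<in> Zinv p \<Longrightarrow> - a \<in> Zinv p"
  using Zinv_Ints_mult[of "-1"] by simp

lemma Zinv_diff: "a \<in> Zinv p \<Longrightarrow> b \<in> Zinv p \<Longrightarrow> a - b \<in> Zinv p"
  using Zinv_add[OF _ Zinv_uminus] by simp

lemma Zinv_frac: "a \<in> Zinv p \<Longrightarrow> frac a \<in> Zinv p"
  unfolding frac_def by (rule Zinv_diff) (auto intro: Ints_subset_Zinv)

lemma Zinv_divisible:
  fixes m :: int
  assumes p: "Factorial_Ring.prime p" and m: "m > 0" and r: "r \<in> Zinv p"
  shows "\<exists>t \<in> Zinv p. of_int m * t - r \<in> \<int>"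
proof -
  obtain k a where a: "r * of_nat (p ^ k) = of_int a"
    using r by (auto simp: Zinv_def elim!: Ints_cases)
  define e where "e = multiplicity (int p) m"
  define n where "n = m div int p ^ e"
  have m_eq: "m = int p ^ e * n"
    unfolding n_def e_def by (simp add: multiplicity_dvd)
  have "\<not> int p dvd n"
    unfolding n_def e_def using multiplicity_decompose[of m "int p"] m p
    by (simp add: prime_nat_iff)
  then have "coprime (int p) n"
    using p by (simp add: prime_imp_coprime)
  then have "coprime n (int p ^ k)"
    by (simp add: ac_simps)
  then obtain u v where uv: "u * n + v * int p ^ k = 1"
    by (metis bezout_int coprime_iff_gcd_eq_1)
  define t :: rat where "t = of_int (u * a) / of_nat p ^ (k + e)"
  have p0: "(of_nat p :: rat) \<noteq> 0" using p by (simp add: prime_gt_0_nat)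
  have "t * of_nat (p ^ (k + e)) = of_int (u * a)"
    unfolding t_def using p0 by simp
  then have "t \<in> Zinv p"
    unfolding Zinv_def by (metis Ints_of_int mem_Collect_eq)
  \<comment> \<open>\<open>m t = n u a / p^k\<close>, and \<open>n u \<equiv> 1\<close> modulo \<open>p^k\<close>\<close>
  moreover have "(of_int m * t - r) * of_nat p ^ k = - of_int (v * a) * of_nat p ^ k"
  proof -
    have "(of_int m * t - r) * of_nat p ^ k = of_int ((u * n - 1) * a)"
      using a p0 unfolding t_def m_eq by (simp add: power_add field_simps)
    also have "u * n - 1 = - v * int p ^ k" using uv by (simp add: algebra_simps)
    finally show ?thesis by simp
  qed
  then have "of_int m * t - r = - of_int (v * a)"
    using p0 by (metis mult_right_cancel power_not_zero)
  ultimately show ?thesis by (metis Ints_minus Ints_of_int)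
qed

lemma carrier_prufer: "carrier (prufer p) = {r. 0 \<le> r \<and> r < 1 \<and> r \<in> Zinv p}"
  by (simp add: prufer_def Zinv_def)

lemma mult_prufer: "x \<otimes>\<^bsub>prufer p\<^esub> y = frac (x + y)"
  by (simp add: prufer_def frac_def)

lemma one_prufer: "\<one>\<^bsub>prufer p\<^esub> = 0"
  by (simp add: prufer_def)

lemma frac_in_carrier_prufer: "a \<in> Zinv p \<Longrightarrow> frac a \<in> carrier (prufer p)"
  by (simp add: carrier_prufer frac_lt_1 Zinv_frac)

lemma comm_group_prufer: "comm_group (prufer p)"
proof (rule comm_groupI)
  fix x y z
  assume x: "x \<in> carrier (prufer p)" and y: "y \<in> carrier (prufer p)"
  then show "x \<otimes>\<^bsub>prufer p\<^esub> y \<in> carrier (prufer p)"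
    by (simp add: mult_prufer carrier_prufer frac_lt_1 Zinv_frac Zinv_add)
  show "x \<otimes>\<^bsub>prufer p\<^esub> y \<otimes>\<^bsub>prufer p\<^esub> z = x \<otimes>\<^bsub>prufer p\<^esub> (y \<otimes>\<^bsub>prufer p\<^esub> z)"
    unfolding mult_prufer by (metis add.assoc frac_add_simps(1) frac_add_simps(2))
  show "x \<otimes>\<^bsub>prufer p\<^esub> y = y \<otimes>\<^bsub>prufer p\<^esub> x"
    by (simp add: mult_prufer add.commute)
  show "\<one>\<^bsub>prufer p\<^esub> \<otimes>\<^bsub>prufer p\<^esub> x = x"
    using x by (simp add: mult_prufer one_prufer carrier_prufer)
  have "frac (- x) \<in> carrier (prufer p)"
    using x by (intro frac_in_carrier_prufer) (simp add: carrier_prufer Zinv_uminus)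
  moreover have "frac (- x) \<otimes>\<^bsub>prufer p\<^esub> x = \<one>\<^bsub>prufer p\<^esub>"
    by (simp add: mult_prufer one_prufer)
  ultimately show "\<exists>y\<in>carrier (prufer p). y \<otimes>\<^bsub>prufer p\<^esub> x = \<one>\<^bsub>prufer p\<^esub>"
    by blast
qed (simp add: one_prufer carrier_prufer Ints_subset_Zinv)

section \<open>Homomorphisms into Pruefer groups\<close>

(* prufer_char G H p c: the map c lifts a homomorphism from the subgroup H of G to
   \<int>[1/p]/\<int> \<cong> \<int>[p^\<infinity>] to rational values. *)
definition prufer_char :: "('a, 'b) monoid_scheme \<Rightarrow> 'a set \<Rightarrow> nat \<Rightarrow> ('a \<Rightarrow> rat) \<Rightarrow> bool" where
  "prufer_char G H p c \<longleftrightarrow> subgroup H G \<and> (\<forall>x\<in>H. c x \<in> Zinv p)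
     \<and> (\<forall>x\<in>H. \<forall>y\<in>H. c (x \<otimes>\<^bsub>G\<^esub> y) - c x - c y \<in> \<int>)"

lemma prufer_char_subgroup: "prufer_char G H p c \<Longrightarrow> subgroup H G"
  by (simp add: prufer_char_def)

lemma prufer_char_Zinv: "prufer_char G H p c \<Longrightarrow> x \<in> H \<Longrightarrow> c x \<in> Zinv p"
  by (simp add: prufer_char_def)

lemma prufer_char_mult:
  "prufer_char G H p c \<Longrightarrow> x \<in> H \<Longrightarrow> y \<in> H \<Longrightarrow> c (x \<otimes>\<^bsub>G\<^esub> y) - c x - c y \<in> \<int>"
  by (simp add: prufer_char_def)

context group
begin

lemma prufer_char_trivial: "prufer_char G {\<one>} p (\<lambda>_. 0)"
  unfolding prufer_char_def using triv_subgroup by (auto intro: Ints_subset_Zinv)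

lemma prufer_char_one:
  assumes c: "prufer_char G H p c"
  shows "c \<one> \<in> \<int>"
proof -
  have one: "\<one> \<in> H" using subgroup.one_closed[OF prufer_char_subgroup[OF c]] .
  have "c (\<one> \<otimes> \<one>) - c \<one> - c \<one> \<in> \<int>" using prufer_char_mult[OF c one one] .
  then have "- c \<one> \<in> \<int>" by simp
  then show ?thesis by (metis Ints_minus minus_minus)
qed

lemma prufer_char_int_pow:
  assumes c: "prufer_char G H p c" and x: "x \<in> H"
  shows "c (x [^] n) - of_int n * c x \<in> \<int>"
proof -
  have sub: "subgroup H G" using c by (rule prufer_char_subgroup)
  have xG: "x \<in> carrier G" using subgroup.mem_carrier[OF sub x] .
  have step: "c (x [^] (n + 1)) - c (x [^] n) - c x \<in> \<int>" for n :: int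
  proof -
    have "x [^] n \<in> H" using sub x by (rule subgroup_int_pow_closed)
    then have "c (x [^] n \<otimes> x) - c (x [^] n) - c x \<in> \<int>"
      using x by (rule prufer_char_mult[OF c])
    moreover have "x [^] (n + 1) = x [^] n \<otimes> x" using int_pow_mult[OF xG, of n 1] xG by simp
    ultimately show ?thesis by simp
  qed
  show ?thesis
  proof (induction n rule: int_induct[where k = 0])
    case base
    then show ?case using prufer_char_one[OF c] by simp
  next
    case (step1 n)
    show ?case by (rule Ints_add_eqI[OF step[of n] step1(2)]) (simp add: algebra_simps)
  next
    case (step2 n)
    show ?case
      by (rule Ints_add_eqI[OF Ints_minus[OF step[of "n - 1", simplified]] step2(2)])
        (simp add: algebra_simps)
  qed
qed

lemma set_mult_generate_eq:
  assumes "g \<in> carrier G"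
  shows "H <#> generate G {g} = {h \<otimes> g [^] (k::int) | h k. h \<in> H}"
  unfolding set_mult_def generate_pow[OF assms] by fastforce

lemma set_mult_generate_memI:
  assumes "h \<in> H" "g \<in> carrier G"
  shows "h \<otimes> g [^] (k::int) \<in> H <#> generate G {g}"
  unfolding set_mult_generate_eq[OF assms(2)] using assms(1) by blast

lemma set_mult_generate_decomposition:
  assumes "g \<in> carrier G"
  obtains h k where "\<And>x. x \<in> H <#> generate G {g} \<Longrightarrow> h x \<in> H \<and> x = h x \<otimes> g [^] (k x :: int)"
proof -
  have "\<forall>x\<in>H <#> generate G {g}. \<exists>hk. fst hk \<in> H \<and> x = fst hk \<otimes> g [^] (snd hk :: int)"
    unfolding set_mult_generate_eq[OF assms] by force
  then obtain hk where "\<forall>x\<in>H <#> generate G {g}. fst (hk x) \<in> H \<and> x = fst (hk x) \<otimes> g [^] (snd (hk x) :: int)"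
    by (rule exE[OF bchoice])
  then show thesis by (intro that[of "\<lambda>x. fst (hk x)" "\<lambda>x. snd (hk x)"]) blast
qed

end

lemma (in comm_group) int_pow_mem_subgroup_iff_dvd:
  assumes sub: "subgroup H G" and g: "g \<in> carrier G"
  obtains m :: nat where "\<And>n::int. g [^] n \<in> H \<longleftrightarrow> int m dvd n"
proof
  interpret normal H G using sub by (rule subgroup_imp_normal)
  have coset: "H #> g \<in> carrier (G Mod H)" using g by (auto simp: FactGroup_def RCOSETS_def)
  fix n :: int
  have "g [^] n \<in> H \<longleftrightarrow> H #> g [^] n = H"
    using g sub coset_join1 coset_join2 by (meson int_pow_closed)
  also have "\<dots> \<longleftrightarrow> (H #> g) [^]\<^bsub>G Mod H\<^esub> n = \<one>\<^bsub>G Mod H\<^esub>"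
    using g by (simp add: FactGroup_int_pow)
  also have "\<dots> \<longleftrightarrow> int (group.ord (G Mod H) (H #> g)) dvd n"
    using group.int_pow_eq_id[OF factorgroup_is_group coset] by simp
  finally show "g [^] n \<in> H \<longleftrightarrow> int (group.ord (G Mod H) (H #> g)) dvd n" .
qed

context comm_group
begin

lemma prufer_char_extension_well_defined:
  assumes c: "prufer_char G H p c" and g: "g \<in> carrier G"
    and compatible: "\<And>n. g [^] n \<in> H \<Longrightarrow> c (g [^] n) - of_int n * t \<in> \<int>"
    and h: "h \<in> H" "h' \<in> H" and eq: "h \<otimes> g [^] k = h' \<otimes> g [^] k'"
  shows "c h' + of_int k' * t - (c h + of_int k * t) \<in> \<int>"
proof -
  have sub: "subgroup H G" using c by (rule prufer_char_subgroup)
  have hG: "h \<in> carrier G" "h' \<in> carrier G" using subgroup.mem_carrier[OF sub] h by auto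
  have "h' = h' \<otimes> g [^] k' \<otimes> g [^] (- k')"
    using hG g by (simp add: m_assoc flip: int_pow_mult)
  also have "\<dots> = h \<otimes> g [^] (k - k')"
    using hG g by (simp add: eq[symmetric] m_assoc flip: int_pow_mult)
  finally have h': "h' = h \<otimes> g [^] (k - k')" .
  have "g [^] (k - k') = inv h \<otimes> h'"
    using hG g by (simp add: h' m_assoc[symmetric])
  then have gH: "g [^] (k - k') \<in> H"
    using sub h by (simp add: subgroup.m_closed subgroup.m_inv_closed)
  show ?thesis
    by (rule Ints_add_eqI[OF prufer_char_mult[OF c h(1) gH] compatible[OF gH]])
      (simp add: h'[symmetric] algebra_simps)
qed

lemma prufer_char_extend_value:
  assumes c: "prufer_char G H p c" and g: "g \<in> carrier G" and t: "t \<in> Zinv p"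
    and compatible: "\<And>n. g [^] n \<in> H \<Longrightarrow> c (g [^] n) - of_int n * t \<in> \<int>"
  shows "\<exists>H' c'. prufer_char G H' p c' \<and> H \<subseteq> H' \<and> g \<in> H'
    \<and> (\<forall>x\<in>H. c' x - c x \<in> \<int>) \<and> c' g - t \<in> \<int>"
proof -
  have sub: "subgroup H G" using c by (rule prufer_char_subgroup)
  have HG: "h \<in> carrier G" if "h \<in> H" for h using subgroup.mem_carrier[OF sub that] .
  define H' where "H' = H <#> generate G {g}"
  have memI: "h0 \<otimes> g [^] (k0::int) \<in> H'" if "h0 \<in> H" for h0 k0
    unfolding H'_def using that g by (rule set_mult_generate_memI)
  obtain h k where hk: "\<And>x. x \<in> H' \<Longrightarrow> h x \<in> H \<and> x = h x \<otimes> g [^] (k x :: int)"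
    unfolding H'_def using set_mult_generate_decomposition[OF g] by blast
  define c' where "c' x = c (h x) + of_int (k x) * t" for x
  have c'_eq: "c' (h0 \<otimes> g [^] k0) - (c h0 + of_int k0 * t) \<in> \<int>" if "h0 \<in> H" for h0 k0
  proof -
    let ?x = "h0 \<otimes> g [^] k0"
    have "h ?x \<in> H" "?x = h ?x \<otimes> g [^] k ?x"
      using hk[OF memI[OF that]] by auto
    from prufer_char_extension_well_defined[OF c g compatible that this] show ?thesis
      unfolding c'_def .
  qed
  have "prufer_char G H' p c'"
    unfolding prufer_char_def
  proof (intro conjI ballI)
    show "subgroup H' G"
      unfolding H'_def using sub g by (simp add: mult_subgroups generate_is_subgroup)
    show "c' x \<in> Zinv p" if "x \<in> H'" for x
      unfolding c'_def using hk[OF that] prufer_char_Zinv[OF c] t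
      by (simp add: Zinv_add Zinv_Ints_mult)
  next
    fix x y assume x: "x \<in> H'" and y: "y \<in> H'"
    define h1 k1 h2 k2 where "h1 = h x" "k1 = k x" "h2 = h y" "k2 = k y"
    have h1: "h1 \<in> H" "x = h1 \<otimes> g [^] k1" and h2: "h2 \<in> H" "y = h2 \<otimes> g [^] k2"
      using hk[OF x] hk[OF y] unfolding h1_k1_h2_k2_def by auto
    have xy: "x \<otimes> y = (h1 \<otimes> h2) \<otimes> g [^] (k1 + k2)"
      using HG[OF h1(1)] HG[OF h2(1)] g by (simp add: h1(2) h2(2) int_pow_mult m_ac)
    have "c' (x \<otimes> y) - (c (h1 \<otimes> h2) + of_int (k1 + k2) * t) \<in> \<int>"
      unfolding xy by (rule c'_eq[OF subgroup.m_closed[OF sub h1(1) h2(1)]])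
    from Ints_add[OF this prufer_char_mult[OF c h1(1) h2(1)]]
    show "c' (x \<otimes> y) - c' x - c' y \<in> \<int>"
      by (simp add: c'_def h1_k1_h2_k2_def algebra_simps)
  qed
  moreover have "H \<subseteq> H'"
  proof
    fix h0 assume "h0 \<in> H"
    with memI[of h0 0] HG show "h0 \<in> H'" by simp
  qed
  moreover have "g \<in> H'"
    using memI[OF subgroup.one_closed[OF sub], of 1] g by simp
  moreover have "\<forall>x\<in>H. c' x - c x \<in> \<int>"
    using c'_eq[of _ 0] HG by simp
  moreover have "c' g - (c \<one> + of_int 1 * t) \<in> \<int>"
    using c'_eq[OF subgroup.one_closed[OF sub], of 1] g by simp
  from Ints_add[OF this prufer_char_one[OF c]] have "c' g - t \<in> \<int>" by simp
  ultimately show ?thesis by blast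
qed

lemma prufer_char_extend:
  assumes c: "prufer_char G H p c" and p: "Factorial_Ring.prime p" and g: "g \<in> carrier G"
  shows "\<exists>H' c'. prufer_char G H' p c' \<and> H \<subseteq> H' \<and> g \<in> H' \<and> (\<forall>x\<in>H. c' x - c x \<in> \<int>)"
proof -
  obtain m :: nat where m: "\<And>n::int. g [^] n \<in> H \<longleftrightarrow> int m dvd n"
    using int_pow_mem_subgroup_iff_dvd[OF prufer_char_subgroup[OF c] g] by blast
  have gm: "g [^] int m \<in> H" using m by simp
  \<comment> \<open>the value \<open>t\<close> at \<open>g\<close> only has to be compatible with \<open>c\<close> on the powers of \<open>g\<^sup>m\<close>,
    and divisibility of \<open>\<int>[p\<^sup>\<infinity>]\<close> provides it\<close>
  obtain t where t: "t \<in> Zinv p" "of_int m * t - c (g [^] int m) \<in> \<int>"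
  proof (cases "m = 0")
    case True
    then show ?thesis
      using that[of 0] prufer_char_one[OF c] Ints_subset_Zinv[of 0] by simp
  next
    case False
    with Zinv_divisible[OF p, of "int m"] prufer_char_Zinv[OF c gm] that show ?thesis by auto
  qed
  have "c (g [^] n) - of_int n * t \<in> \<int>" if "g [^] n \<in> H" for n
  proof -
    have "int m dvd n" using m that by blast
    then obtain j where n: "n = int m * j" by (rule dvdE)
    have "c (g [^] n) - of_int n * t
        = (c ((g [^] int m) [^] j) - of_int j * c (g [^] int m))
          - of_int j * (of_int m * t - c (g [^] int m))"
      using g by (simp add: n int_pow_pow algebra_simps)
    then show ?thesis
      using prufer_char_int_pow[OF c gm, of j] t(2) by simp
  qed
  from prufer_char_extend_value[OF c g t(1) this] show ?thesis by blast
qed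

lemma prufer_char_nontrivial:
  assumes g: "g \<in> carrier G" "g \<noteq> \<one>"
  shows "\<exists>p H c. Factorial_Ring.prime p \<and> prufer_char G H p c \<and> g \<in> H \<and> c g \<notin> \<int>"
proof -
  obtain m :: nat where m: "\<And>n::int. g [^] n \<in> {\<one>} \<longleftrightarrow> int m dvd n"
    using int_pow_mem_subgroup_iff_dvd[OF triv_subgroup g(1)] by blast
  have "m \<noteq> 1" using m[of 1] g by auto
  then obtain p :: nat where p: "Factorial_Ring.prime p" "p dvd m"
    using prime_factor_nat by blast
  define t :: rat where "t = 1 / of_nat p"
  have p2: "p \<ge> 2" using p(1) prime_ge_2_nat by blast
  have "t * of_nat (p ^ 1) \<in> \<int>" using p2 by (simp add: t_def)
  then have t_Zinv: "t \<in> Zinv p" unfolding Zinv_def by blast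
  \<comment> \<open>\<open>p\<close> divides the order \<open>m\<close> of \<open>g\<close> (\<open>m = 0\<close> if the order is infinite), so \<open>g \<mapsto> 1/p\<close>
    is compatible with the trivial homomorphism on \<open>{\<one>}\<close>\<close>
  have "0 - of_int n * t \<in> \<int>" if "g [^] n \<in> {\<one>}" for n
  proof -
    have "int p dvd n" using m that p(2) by (meson dvd_trans int_dvd_int_iff)
    then obtain j where "n = int p * j" by (rule dvdE)
    then show ?thesis using p2 by (simp add: t_def)
  qed
  then obtain H c where Hc: "prufer_char G H p c" "g \<in> H" "c g - t \<in> \<int>"
    using prufer_char_extend_value[OF prufer_char_trivial g(1) t_Zinv] by auto
  have "0 < t" "t < 1" using p2 by (simp_all add: t_def)
  then have "frac t > 0" by (simp add: frac_eq)
  then have "t \<notin> \<int>" by simp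
  then have "c g \<notin> \<int>" using Ints_iff_if_diff_Ints[OF Hc(3)] by blast
  then show ?thesis using p(1) Hc(1,2) by blast
qed

lemma prufer_char_extend_finite:
  assumes "finite S" "S \<subseteq> carrier G" "prufer_char G H p c" "Factorial_Ring.prime p"
  shows "\<exists>H' c'. prufer_char G H' p c' \<and> H \<subseteq> H' \<and> S \<subseteq> H' \<and> (\<forall>x\<in>H. c' x - c x \<in> \<int>)"
  using assms(1,2)
proof (induction S rule: finite_induct)
  case empty
  show ?case by (intro exI[of _ H] exI[of _ c]) (simp add: assms(3))
next
  case (insert g S)
  then obtain H1 c1 where
    H1: "prufer_char G H1 p c1" "H \<subseteq> H1" "S \<subseteq> H1" "\<forall>x\<in>H. c1 x - c x \<in> \<int>"
    by auto
  obtain H2 c2 where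
    H2: "prufer_char G H2 p c2" "H1 \<subseteq> H2" "g \<in> H2" "\<forall>x\<in>H1. c2 x - c1 x \<in> \<int>"
    using prufer_char_extend[OF H1(1) assms(4)] insert.prems by (meson insert_subset)
  have "c2 x - c x \<in> \<int>" if "x \<in> H" for x
  proof (rule Ints_add_eqI)
    show "c2 x - c1 x \<in> \<int>" "c1 x - c x \<in> \<int>" using H1(2,4) H2(4) that by auto
  qed simp
  with H1 H2 show ?case by blast
qed

lemma prufer_char_separates:
  assumes S: "finite S" "S \<subseteq> carrier G" and su: "s \<in> S" "u \<in> S" "s \<noteq> u"
  shows "\<exists>p H c. Factorial_Ring.prime p \<and> prufer_char G H p c \<and> S \<subseteq> H \<and> c s - c u \<notin> \<int>"
proof -
  have s: "s \<in> carrier G" and u: "u \<in> carrier G" using S su by auto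
  have "s \<otimes> inv u \<noteq> \<one>" using s u su(3) by (metis inv_closed inv_equality r_inv)
  then obtain p H0 c0 where
    H0: "Factorial_Ring.prime p" "prufer_char G H0 p c0" "s \<otimes> inv u \<in> H0" "c0 (s \<otimes> inv u) \<notin> \<int>"
    using prufer_char_nontrivial s u by blast
  obtain H c where
    H: "prufer_char G H p c" "H0 \<subseteq> H" "S \<subseteq> H" "\<forall>x\<in>H0. c x - c0 x \<in> \<int>"
    using prufer_char_extend_finite[OF S H0(2,1)] by blast
  have "c (s \<otimes> inv u) \<notin> \<int>"
    using Ints_iff_if_diff_Ints[OF H(4)[rule_format, OF H0(3)]] H0(4) by blast
  moreover have "c (s \<otimes> inv u \<otimes> u) - c (s \<otimes> inv u) - c u \<in> \<int>"
    using H(2,3) H0(3) su(2) by (intro prufer_char_mult[OF H(1)]) auto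
  moreover have "s \<otimes> inv u \<otimes> u = s" using s u by (simp add: m_assoc)
  ultimately have "c s - c u \<notin> \<int>"
    using Ints_iff_if_diff_Ints[of "c s - c u" "c (s \<otimes> inv u)"] by (simp add: algebra_simps)
  with H0(1) H(1,3) show ?thesis by blast
qed

end

section \<open>Finite partial embeddings into the target group\<close>

lemma group_prufer_sum: "group (sum_group Npos (\<lambda>_. prufer p))"
  using comm_group_prufer by (intro sum_group) (simp add: comm_group_def)

lemma group_target_group: "group target_group"
  unfolding target_group_def by (intro sum_group group_prufer_sum)

lemma carrier_prufer_sum:
  "carrier (sum_group Npos (\<lambda>_. prufer p)) =
    {x \<in> (\<Pi>\<^sub>E i\<in>Npos. carrier (prufer p)). finite {i \<in> Npos. x i \<noteq> 0}}"
  using comm_group_prufer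
  by (subst carrier_sum_group) (auto simp: comm_group_def one_prufer)

lemma carrier_target_group:
  "carrier target_group =
    {x \<in> (\<Pi>\<^sub>E q\<in>{q. Factorial_Ring.prime q}. carrier (sum_group Npos (\<lambda>_. prufer q))).
      finite {q. Factorial_Ring.prime q \<and> x q \<noteq> (\<lambda>i\<in>Npos. 0)}}"
  unfolding target_group_def by (subst carrier_sum_group) (auto simp: group_prufer_sum one_prufer)

lemma mult_target_group:
  "x \<otimes>\<^bsub>target_group\<^esub> y = (\<lambda>q\<in>{q. Factorial_Ring.prime q}. \<lambda>i\<in>Npos. frac (x q i + y q i))"
  unfolding target_group_def by (simp add: mult_prufer)

lemma one_target_group: "\<one>\<^bsub>target_group\<^esub> = (\<lambda>q\<in>{q. Factorial_Ring.prime q}. \<lambda>i\<in>Npos. 0)"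
  unfolding target_group_def by (simp add: one_prufer)

lemma comm_group_target_group: "comm_group target_group"
  by (rule group.group_comm_groupI[OF group_target_group]) (simp add: mult_target_group add.commute)

definition prufer_coords :: "nat \<Rightarrow> (nat \<Rightarrow> nat) \<Rightarrow> (nat \<Rightarrow> 'a \<Rightarrow> rat) \<Rightarrow> 'a \<Rightarrow> nat \<Rightarrow> nat \<Rightarrow> rat"
  where "prufer_coords n p c x =
    (\<lambda>q\<in>{q. Factorial_Ring.prime q}. \<lambda>i\<in>Npos. if i \<le> n \<and> p i = q then frac (c i x) else 0)"

lemma prufer_coords_eq_imp_Ints:
  assumes "prufer_coords n p c x = prufer_coords n p c y" "i \<in> {1..n}" "Factorial_Ring.prime (p i)"
  shows "c i x - c i y \<in> \<int>"
proof -
  have "prufer_coords n p c x (p i) i = prufer_coords n p c y (p i) i" using assms(1) by simp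
  then have "frac (c i x) = frac (c i y)" using assms(2,3) by (simp add: prufer_coords_def Npos_def)
  then show ?thesis by (simp add: frac_eq_iff_diff_Ints)
qed

context group
begin

context
  fixes S :: "'a set" and n :: nat and p :: "nat \<Rightarrow> nat" and c :: "nat \<Rightarrow> 'a \<Rightarrow> rat"
  assumes chars: "\<forall>i\<in>{1..n}. Factorial_Ring.prime (p i) \<and> (\<exists>H. prufer_char G H (p i) (c i) \<and> S \<subseteq> H)"
begin

lemma prufer_coords_in_carrier:
  assumes x: "x \<in> S"
  shows "prufer_coords n p c x \<in> carrier target_group"
proof -
  have "prufer_coords n p c x q \<in> carrier (sum_group Npos (\<lambda>_. prufer q))"
    if q: "Factorial_Ring.prime q" for q
  proof -
    have "(if i \<le> n \<and> p i = q then frac (c i x) else 0) \<in> carrier (prufer q)" if i: "i \<in> Npos" for i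
    proof (cases "i \<le> n \<and> p i = q")
      case True
      then have "i \<in> {1..n}" using i by (simp add: Npos_def)
      then obtain H where H: "prufer_char G H (p i) (c i)" "S \<subseteq> H"
        using chars by blast
      then have "c i x \<in> Zinv q" using x True by (auto intro: prufer_char_Zinv)
      then show ?thesis using True frac_in_carrier_prufer by simp
    next
      case False
      show ?thesis
        using frac_in_carrier_prufer[OF Ints_subset_Zinv[of 0 q]] by (subst if_not_P[OF False]) simp
    qed
    moreover have "finite {i \<in> Npos. prufer_coords n p c x q i \<noteq> 0}"
      by (rule finite_subset[of _ "{1..n}"]) (use q in \<open>auto simp: prufer_coords_def Npos_def\<close>)
    ultimately show ?thesis using q unfolding carrier_prufer_sum by (simp add: prufer_coords_def)
  qed
  moreover have "finite {q. Factorial_Ring.prime q \<and> prufer_coords n p c x q \<noteq> (\<lambda>i\<in>Npos. 0)}"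
    by (rule finite_subset[of _ "p ` {1..n}"]) (auto simp: prufer_coords_def Npos_def fun_eq_iff)
  ultimately show ?thesis unfolding carrier_target_group by (simp add: prufer_coords_def)
qed

lemma prufer_coords_mult:
  assumes "x \<in> S" "y \<in> S"
  shows "prufer_coords n p c (x \<otimes> y) = prufer_coords n p c x \<otimes>\<^bsub>target_group\<^esub> prufer_coords n p c y"
proof -
  have "frac (c i (x \<otimes> y)) = frac (frac (c i x) + frac (c i y))" if i: "i \<in> {1..n}" for i
  proof -
    obtain H where H: "prufer_char G H (p i) (c i)" "S \<subseteq> H" using chars[rule_format, OF i] by blast
    have "c i (x \<otimes> y) - c i x - c i y \<in> \<int>"
      using assms H(2) by (intro prufer_char_mult[OF H(1)]) auto
    then show ?thesis by (simp add: frac_eq_iff_diff_Ints diff_diff_eq)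
  qed
  then show ?thesis
    unfolding mult_target_group prufer_coords_def by (intro restrict_ext) (auto simp: Npos_def)
qed

lemma prufer_coords_one: "prufer_coords n p c \<one> = \<one>\<^bsub>target_group\<^esub>"
proof -
  have "frac (c i \<one>) = 0" if "i \<in> {1..n}" for i
    using chars[rule_format, OF that] prufer_char_one by auto
  then show ?thesis
    unfolding one_target_group prufer_coords_def by (intro restrict_ext) (auto simp: Npos_def)
qed

end

end

lemma (in comm_group) separating_prufer_chars:
  assumes S: "finite S" "S \<subseteq> carrier G"
  obtains n :: nat and p :: "nat \<Rightarrow> nat" and c :: "nat \<Rightarrow> 'a \<Rightarrow> rat" where
    "\<forall>i\<in>{1..n}. Factorial_Ring.prime (p i) \<and> (\<exists>H. prufer_char G H (p i) (c i) \<and> S \<subseteq> H)"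
    "\<And>s u. s \<in> S \<Longrightarrow> u \<in> S \<Longrightarrow> s \<noteq> u \<Longrightarrow> \<exists>i\<in>{1..n}. c i s - c i u \<notin> \<int>"
proof -
  define P where "P = {(s, u). s \<in> S \<and> u \<in> S \<and> s \<noteq> u}"
  have "P \<subseteq> S \<times> S" unfolding P_def by auto
  from finite_subset[OF this] have "finite P" using S(1) by simp
  then obtain e where e: "bij_betw e {1..card P} P" using ex_bij_betw_nat_finite_1 by blast
  have "\<forall>i\<in>{1..card P}. \<exists>pc. Factorial_Ring.prime (fst pc)
      \<and> (\<exists>H. prufer_char G H (fst pc) (snd pc) \<and> S \<subseteq> H)
      \<and> snd pc (fst (e i)) - snd pc (snd (e i)) \<notin> \<int>"
  proof
    fix i assume "i \<in> {1..card P}"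
    then have "e i \<in> P" using e by (auto simp: bij_betw_def)
    then obtain s u where su: "e i = (s, u)" "s \<in> S" "u \<in> S" "s \<noteq> u"
      unfolding P_def by auto
    obtain q H d where "Factorial_Ring.prime q" "prufer_char G H q d" "S \<subseteq> H" "d s - d u \<notin> \<int>"
      using prufer_char_separates[OF S su(2-4)] by blast
    then show "\<exists>pc. Factorial_Ring.prime (fst pc)
      \<and> (\<exists>H. prufer_char G H (fst pc) (snd pc) \<and> S \<subseteq> H)
      \<and> snd pc (fst (e i)) - snd pc (snd (e i)) \<notin> \<int>"
      using su(1) by (intro exI[of _ "(q, d)"]) auto
  qed
  then obtain pc where pc: "\<forall>i\<in>{1..card P}. Factorial_Ring.prime (fst (pc i))
      \<and> (\<exists>H. prufer_char G H (fst (pc i)) (snd (pc i)) \<and> S \<subseteq> H)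
      \<and> snd (pc i) (fst (e i)) - snd (pc i) (snd (e i)) \<notin> \<int>"
    by (rule exE[OF bchoice])
  show thesis
  proof (rule that[of "card P" "\<lambda>i. fst (pc i)" "\<lambda>i. snd (pc i)"])
    show "\<forall>i\<in>{1..card P}. Factorial_Ring.prime (fst (pc i))
      \<and> (\<exists>H. prufer_char G H (fst (pc i)) (snd (pc i)) \<and> S \<subseteq> H)"
      using pc by simp
    fix s u assume "s \<in> S" "u \<in> S" "s \<noteq> u"
    then have "(s, u) \<in> e ` {1..card P}" using e unfolding bij_betw_def P_def by auto
    then obtain i where i: "i \<in> {1..card P}" "e i = (s, u)" by auto
    then show "\<exists>i\<in>{1..card P}. snd (pc i) s - snd (pc i) u \<notin> \<int>"
      using pc[rule_format, OF i(1)] by auto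
  qed
qed

lemma (in comm_group) finite_partial_embedding_target_group:
  assumes S: "finite S" "S \<subseteq> carrier G"
  obtains \<psi> where "\<psi> ` S \<subseteq> carrier target_group" "inj_on \<psi> S" "\<psi> \<one> = \<one>\<^bsub>target_group\<^esub>"
    "\<And>x y. x \<in> S \<Longrightarrow> y \<in> S \<Longrightarrow> \<psi> (x \<otimes> y) = \<psi> x \<otimes>\<^bsub>target_group\<^esub> \<psi> y"
proof -
  obtain n :: nat and p :: "nat \<Rightarrow> nat" and c :: "nat \<Rightarrow> 'a \<Rightarrow> rat" where
    chars: "\<forall>i\<in>{1..n}. Factorial_Ring.prime (p i) \<and> (\<exists>H. prufer_char G H (p i) (c i) \<and> S \<subseteq> H)"
    and separating: "\<And>s u. s \<in> S \<Longrightarrow> u \<in> S \<Longrightarrow> s \<noteq> u \<Longrightarrow> \<exists>i\<in>{1..n}. c i s - c i u \<notin> \<int>"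
    using separating_prufer_chars[OF S] by metis
  let ?\<psi> = "prufer_coords n p c"
  show thesis
  proof
    show "?\<psi> ` S \<subseteq> carrier target_group" using prufer_coords_in_carrier[OF chars] by blast
    show "?\<psi> \<one> = \<one>\<^bsub>target_group\<^esub>" by (rule prufer_coords_one[OF chars])
    show "?\<psi> (x \<otimes> y) = ?\<psi> x \<otimes>\<^bsub>target_group\<^esub> ?\<psi> y" if "x \<in> S" "y \<in> S" for x y
      using prufer_coords_mult[OF chars that] .
    show "inj_on ?\<psi> S"
    proof (rule inj_onI, rule ccontr)
      fix s u assume su: "s \<in> S" "u \<in> S" "?\<psi> s = ?\<psi> u" "s \<noteq> u"
      obtain i where i: "i \<in> {1..n}" "c i s - c i u \<notin> \<int>"
        using separating[OF su(1,2,4)] by blast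
      have "c i s - c i u \<in> \<int>"
        using prufer_coords_eq_imp_Ints[OF su(3) i(1)] chars i(1) by blast
      with i(2) show False by contradiction
    qed
  qed
qed

section \<open>Transport of structure and density\<close>

lemma group_by_transport:
  fixes M :: "('a, 'c) monoid_scheme" and T :: "('b, 'd) monoid_scheme"
  assumes T: "group T" and f: "bij_betw f (carrier M) (carrier T)"
    and closed: "\<And>x y. x \<in> carrier M \<Longrightarrow> y \<in> carrier M \<Longrightarrow> x \<otimes>\<^bsub>M\<^esub> y \<in> carrier M"
    and hom: "\<And>x y. x \<in> carrier M \<Longrightarrow> y \<in> carrier M \<Longrightarrow> f (x \<otimes>\<^bsub>M\<^esub> y) = f x \<otimes>\<^bsub>T\<^esub> f y"
    and one: "\<one>\<^bsub>M\<^esub> \<in> carrier M" "f \<one>\<^bsub>M\<^esub> = \<one>\<^bsub>T\<^esub>"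
  shows "group M"
proof -
  interpret T: group T by (rule T)
  have inj: "x = y" if "x \<in> carrier M" "y \<in> carrier M" "f x = f y" for x y
    using f that by (auto simp: bij_betw_def inj_on_def)
  have fM: "f x \<in> carrier T" if "x \<in> carrier M" for x using f that by (auto simp: bij_betw_def)
  show ?thesis
  proof (rule groupI)
    fix x y z assume x: "x \<in> carrier M" and y: "y \<in> carrier M" and z: "z \<in> carrier M"
    show "x \<otimes>\<^bsub>M\<^esub> y \<otimes>\<^bsub>M\<^esub> z = x \<otimes>\<^bsub>M\<^esub> (y \<otimes>\<^bsub>M\<^esub> z)"
      using x y z by (intro inj) (simp_all add: closed hom fM T.m_assoc)
  next
    fix x assume x: "x \<in> carrier M"
    show "\<one>\<^bsub>M\<^esub> \<otimes>\<^bsub>M\<^esub> x = x"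
      using x one by (intro inj) (simp_all add: closed hom fM)
    obtain y where y: "y \<in> carrier M" "f y = inv\<^bsub>T\<^esub> f x"
      using f fM[OF x] by (metis T.inv_closed bij_betw_iff_bijections)
    then have "y \<otimes>\<^bsub>M\<^esub> x = \<one>\<^bsub>M\<^esub>"
      using x one by (intro inj) (simp_all add: closed hom fM)
    with y(1) show "\<exists>y\<in>carrier M. y \<otimes>\<^bsub>M\<^esub> x = \<one>\<^bsub>M\<^esub>" by blast
  qed (use closed one in auto)
qed

definition transport_table :: "(nat \<Rightarrow> 'a) \<Rightarrow> ('a, 'b) monoid_scheme \<Rightarrow> nat \<times> nat \<Rightarrow> nat" where
  "transport_table \<phi> T = (\<lambda>(x, y)\<in>Npos \<times> Npos. inv_into Npos \<phi> (\<phi> x \<otimes>\<^bsub>T\<^esub> \<phi> y))"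

context
  fixes \<phi> :: "nat \<Rightarrow> 'a" and T :: "('a, 'b) monoid_scheme"
  assumes T: "group T" and \<phi>: "bij_betw \<phi> Npos (carrier T)"
begin

lemma transport_table_closed_hom:
  assumes "x \<in> Npos" "y \<in> Npos"
  shows "transport_table \<phi> T (x, y) \<in> Npos"
    and "\<phi> (transport_table \<phi> T (x, y)) = \<phi> x \<otimes>\<^bsub>T\<^esub> \<phi> y"
proof -
  have "\<phi> x \<otimes>\<^bsub>T\<^esub> \<phi> y \<in> \<phi> ` Npos"
    using assms \<phi> group.is_monoid[OF T] by (auto simp: bij_betw_def intro: monoid.m_closed)
  then show "transport_table \<phi> T (x, y) \<in> Npos" "\<phi> (transport_table \<phi> T (x, y)) = \<phi> x \<otimes>\<^bsub>T\<^esub> \<phi> y"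
    using assms by (simp_all add: transport_table_def inv_into_into f_inv_into_f)
qed

lemma transport_table_eqI:
  assumes "x \<in> Npos" "y \<in> Npos" "z \<in> Npos" "\<phi> z = \<phi> x \<otimes>\<^bsub>T\<^esub> \<phi> y"
  shows "transport_table \<phi> T (x, y) = z"
  using transport_table_closed_hom[OF assms(1,2)] assms(3,4) \<phi>
  by (auto simp: bij_betw_def inj_on_def)

lemma iso_transport_table: "\<phi> \<in> iso (tbl (transport_table \<phi> T)) T"
  using \<phi> transport_table_closed_hom by (auto simp: iso_def hom_def tbl_def bij_betw_def)

lemma transport_table_in_GG:
  assumes one: "\<phi> 1 = \<one>\<^bsub>T\<^esub>"
  shows "transport_table \<phi> T \<in> GG"
proof -
  have "transport_table \<phi> T \<in> topspace table_space"
    using transport_table_closed_hom(1)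
    by (auto simp: table_space_def transport_table_def PiE_iff)
  moreover have "group (tbl (transport_table \<phi> T))"
    by (rule group_by_transport[OF T, of \<phi>])
      (use \<phi> one transport_table_closed_hom in \<open>auto simp: tbl_def Npos_def\<close>)
  ultimately show ?thesis by (simp add: GG_def)
qed

end

lemma extend_inj_on_to_bij_betw:
  assumes A: "countable A" "infinite A" and B: "countable B" "infinite B"
    and S: "finite S" "S \<subseteq> A" and \<psi>: "inj_on \<psi> S" "\<psi> ` S \<subseteq> B"
  obtains \<phi> where "bij_betw \<phi> A B" "\<And>x. x \<in> S \<Longrightarrow> \<phi> x = \<psi> x"
proof -
  obtain a where a: "bij_betw a (A - S) (UNIV :: nat set)"
    using A S(1) by (meson countableE_infinite countable_Diff Diff_infinite_finite)
  obtain b where b: "bij_betw b (B - \<psi> ` S) (UNIV :: nat set)"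
    using B S(1) by (meson countableE_infinite countable_Diff Diff_infinite_finite finite_imageI)
  define f where "f = inv_into (B - \<psi> ` S) b \<circ> a"
  have f: "bij_betw f (A - S) (B - \<psi> ` S)"
    unfolding f_def using a b by (intro bij_betw_trans bij_betw_inv_into)
  let ?\<phi> = "\<lambda>x. if x \<in> S then \<psi> x else f x"
  have "bij_betw ?\<phi> S (\<psi> ` S)"
    using inj_on_imp_bij_betw[OF \<psi>(1)] by (rule bij_betw_cong[THEN iffD1, rotated]) simp
  moreover have "bij_betw ?\<phi> (A - S) (B - \<psi> ` S)"
    using f by (rule bij_betw_cong[THEN iffD1, rotated]) simp
  ultimately have "bij_betw ?\<phi> (S \<union> (A - S)) (\<psi> ` S \<union> (B - \<psi> ` S))"
    by (rule bij_betw_combine) blast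
  moreover have "S \<union> (A - S) = A" "\<psi> ` S \<union> (B - \<psi> ` S) = B" using S(2) \<psi>(2) by auto
  ultimately show thesis using that by simp
qed

lemma Npos_infinite: "infinite Npos"
  unfolding Npos_def by (rule infinite_Ici)

lemma iso_table_extending_partial_embedding:
  assumes A: "A \<in> GG" "tbl A \<cong> target_group"
    and S: "finite S" "S \<subseteq> Npos" "1 \<in> S"
    and \<psi>: "\<psi> ` S \<subseteq> carrier target_group" "inj_on \<psi> S" "\<psi> 1 = \<one>\<^bsub>target_group\<^esub>"
  obtains H where "H \<in> GG" "tbl H \<cong> tbl A"
    "\<And>x y z. x \<in> S \<Longrightarrow> y \<in> S \<Longrightarrow> z \<in> S \<Longrightarrow> \<psi> z = \<psi> x \<otimes>\<^bsub>target_group\<^esub> \<psi> y \<Longrightarrow> H (x, y) = z"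
proof -
  obtain f where "f \<in> iso (tbl A) target_group" using A(2) by (auto simp: is_iso_def)
  then have f: "bij_betw f Npos (carrier target_group)" by (simp add: iso_def tbl_def)
  have "countable (carrier target_group)" using countableI_bij1[OF f] by simp
  moreover have "infinite (carrier target_group)" using bij_betw_finite[OF f] Npos_infinite by simp
  ultimately obtain \<phi> where \<phi>: "bij_betw \<phi> Npos (carrier target_group)" "\<And>x. x \<in> S \<Longrightarrow> \<phi> x = \<psi> x"
    using extend_inj_on_to_bij_betw[OF countableI_type Npos_infinite _ _ S(1,2) \<psi>(2,1)] by blast
  let ?H = "transport_table \<phi> target_group"
  show thesis
  proof
    show "?H \<in> GG"
      using transport_table_in_GG[OF group_target_group \<phi>(1)] \<phi>(2) \<psi>(3) S(3) by simp
    have "group (tbl A)" using A(1) by (simp add: GG_def)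
    then have "target_group \<cong> tbl A" using A(2) by (rule group.iso_sym)
    moreover have "tbl ?H \<cong> target_group"
      using iso_transport_table[OF group_target_group \<phi>(1)] by (auto simp: is_iso_def)
    ultimately show "tbl ?H \<cong> tbl A" by (rule iso_trans[rotated])
    show "?H (x, y) = z"
      if "x \<in> S" "y \<in> S" "z \<in> S" "\<psi> z = \<psi> x \<otimes>\<^bsub>target_group\<^esub> \<psi> y" for x y z
      using that S(2) \<phi>(2) by (intro transport_table_eqI[OF group_target_group \<phi>(1)]) auto
  qed
qed

lemma exists_iso_table_agreeing_on_finite:
  assumes G: "G \<in> AA" and A: "A \<in> GG" "tbl A \<cong> target_group"
    and C: "finite C" "C \<subseteq> Npos \<times> Npos"
  shows "\<exists>H\<in>GG. tbl H \<cong> tbl A \<and> (\<forall>z\<in>C. H z = G z)"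
proof -
  interpret K: comm_group "tbl G" using G by (simp add: AA_def)
  have K_simps: "carrier (tbl G) = Npos" "\<one>\<^bsub>tbl G\<^esub> = 1" "\<And>x y. x \<otimes>\<^bsub>tbl G\<^esub> y = G (x, y)"
    by (simp_all add: tbl_def)
  define S where "S = insert 1 (fst ` C \<union> snd ` C \<union> G ` C)"
  have GC: "G z \<in> Npos" if "z \<in> C" for z
  proof -
    have "fst z \<in> carrier (tbl G)" "snd z \<in> carrier (tbl G)" using that C(2) by (auto simp: K_simps)
    from K.m_closed[OF this] show ?thesis by (simp add: K_simps)
  qed
  have S: "finite S" "S \<subseteq> Npos" "1 \<in> S"
    unfolding S_def using C GC by (auto simp: Npos_def)
  obtain \<psi> where \<psi>: "\<psi> ` S \<subseteq> carrier target_group" "inj_on \<psi> S" "\<psi> 1 = \<one>\<^bsub>target_group\<^esub>"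
    "\<And>x y. x \<in> S \<Longrightarrow> y \<in> S \<Longrightarrow> \<psi> (G (x, y)) = \<psi> x \<otimes>\<^bsub>target_group\<^esub> \<psi> y"
    using K.finite_partial_embedding_target_group[OF S(1) S(2)[folded K_simps(1)]]
    unfolding K_simps by blast
  obtain H where H: "H \<in> GG" "tbl H \<cong> tbl A"
    "\<And>x y z. x \<in> S \<Longrightarrow> y \<in> S \<Longrightarrow> z \<in> S \<Longrightarrow> \<psi> z = \<psi> x \<otimes>\<^bsub>target_group\<^esub> \<psi> y \<Longrightarrow> H (x, y) = z"
    using iso_table_extending_partial_embedding[OF A S \<psi>(1-3)] by blast
  have "H (x, y) = G (x, y)" if "(x, y) \<in> C" for x y
  proof -
    have "x \<in> fst ` C" "y \<in> snd ` C" "G (x, y) \<in> G ` C"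
      using rev_image_eqI[OF that, of x fst] rev_image_eqI[OF that, of y snd]
        rev_image_eqI[OF that, of "G (x, y)" G] by simp_all
    then have "x \<in> S" "y \<in> S" "G (x, y) \<in> S" unfolding S_def by blast+
    with \<psi>(4) show ?thesis by (intro H(3)) auto
  qed
  with H(1,2) show ?thesis by auto
qed

lemma in_closure_of_product_discrete:
  assumes f: "f \<in> topspace (product_topology (\<lambda>i. discrete_topology (U i)) I)"
    and Y: "Y \<subseteq> topspace (product_topology (\<lambda>i. discrete_topology (U i)) I)"
    and approx: "\<And>C. finite C \<Longrightarrow> C \<subseteq> I \<Longrightarrow> \<exists>g\<in>Y. \<forall>i\<in>C. g i = f i"
  shows "f \<in> product_topology (\<lambda>i. discrete_topology (U i)) I closure_of Y"
  unfolding in_closure_of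
proof (intro conjI allI impI f)
  fix W assume "f \<in> W \<and> openin (product_topology (\<lambda>i. discrete_topology (U i)) I) W"
  then obtain V where "finite {i \<in> I. V i \<noteq> topspace (discrete_topology (U i))}"
    "f \<in> Pi\<^sub>E I V" "Pi\<^sub>E I V \<subseteq> W"
    unfolding openin_product_topology_alt by blast
  then have V: "finite {i \<in> I. V i \<noteq> U i}" "f \<in> Pi\<^sub>E I V" "Pi\<^sub>E I V \<subseteq> W"
    by simp_all
  obtain g where g: "g \<in> Y" "\<forall>i\<in>{i \<in> I. V i \<noteq> U i}. g i = f i"
    using approx[OF V(1)] by blast
  have "g \<in> Pi\<^sub>E I U" using Y g(1) by auto
  then have "g \<in> Pi\<^sub>E I V" using V(2) g(2) by (auto simp: PiE_iff)
  then show "\<exists>g. g \<in> Y \<and> g \<in> W" using g(1) V(3) by blast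
qed


lemma iso_class_subset_AA:
  assumes "tbl A \<cong> target_group"
  shows "{G \<in> GG. tbl G \<cong> tbl A} \<subseteq> AA"
proof
  fix G assume G: "G \<in> {G \<in> GG. tbl G \<cong> tbl A}"
  then have gG: "group (tbl G)" and "tbl G \<cong> tbl A" by (simp_all add: GG_def)
  from iso_trans[OF this(2) assms] have "target_group \<cong> tbl G" by (rule group.iso_sym[OF gG])
  then have "comm_group (tbl G)"
    by (rule comm_group.iso_imp_comm_group[OF comm_group_target_group _ group.is_monoid[OF gG]])
  then show "G \<in> AA" using G by (simp add: AA_def)
qed

lemma AA_subset_closure_of_iso_class:
  assumes "A \<in> GG" "tbl A \<cong> target_group"
  shows "AA \<subseteq> table_space closure_of {G \<in> GG. tbl G \<cong> tbl A}"
proof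
  fix G assume G: "G \<in> AA"
  show "G \<in> table_space closure_of {G \<in> GG. tbl G \<cong> tbl A}"
    unfolding table_space_def
  proof (rule in_closure_of_product_discrete)
    show "G \<in> topspace (product_topology (\<lambda>_. discrete_topology Npos) (Npos \<times> Npos))"
      "{G \<in> GG. tbl G \<cong> tbl A} \<subseteq> topspace (product_topology (\<lambda>_. discrete_topology Npos) (Npos \<times> Npos))"
      using G by (auto simp: AA_def GG_def table_space_def)
    fix C assume "finite C" "C \<subseteq> Npos \<times> Npos"
    from exists_iso_table_agreeing_on_finite[OF G assms this]
    show "\<exists>H\<in>{G \<in> GG. tbl G \<cong> tbl A}. \<forall>z\<in>C. H z = G z" by blast
  qed
qed

theorem proposition8p6:
  assumes "A \<in> GG"
    and "tbl A \<cong> target_group"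
  shows "{G \<in> GG. tbl G \<cong> tbl A} \<subseteq> AA
    \<and> (subtopology table_space AA) closure_of {G \<in> GG. tbl G \<cong> tbl A} = AA"
proof
  let ?I = "{G \<in> GG. tbl G \<cong> tbl A}"
  show "?I \<subseteq> AA" using assms(2) by (rule iso_class_subset_AA)
  then have "subtopology table_space AA closure_of ?I = AA \<inter> (table_space closure_of ?I)"
    by (simp add: closure_of_subtopology Int_absorb1)
  with AA_subset_closure_of_iso_class[OF assms] show "subtopology table_space AA closure_of ?I = AA"
    by blast
qed

end
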